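(* $\mathrm{cov}(\mathcal{M})\leq\mathfrak{s}(\mathbb{R})$.
   Context: $\mathrm{cov}(\mathcal{M})$ is the smallest number of meager subsets of $\mathbb{R}$ whose union is $\mathbb{R}$. For infinite sets $U, A$, say $U$ splits $A$ if both $A\cap U$ and $A\setminus U$ are infinite. $\mathfrak{s}(\mathbb{R})$ is the smallest cardinality of a family $\mathcal{U}$ of open subsets of $\mathbb{R}$ (usual topology) such that every infinite $A\subseteq\mathbb{R}$ is split by some $U\in\mathcal{U}$. *)

theory Defs
  imports "HOL-Analysis.Analysis" "HOL-Library.Equipollence"
begin

definition nowhere_dense :: "real set \<Rightarrow> bool" where
  "nowhere_dense S \<longleftrightarrow> interior (closure S) = {}"

definition meager :: "real set \<Rightarrow> bool" where
  "meager M \<longleftrightarrow> (\<exists>\<N>. countable \<N> \<and> (\<forall>N\<in>\<N>. nowhere_dense N) \<and> M \<subseteq> \<Union>\<N>)"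

definition splits :: "'a set \<Rightarrow> 'a set \<Rightarrow> bool" where
  "splits U A \<longleftrightarrow> infinite (A \<inter> U) \<and> infinite (A - U)"

definition meager_cover :: "real set set \<Rightarrow> bool" where
  "meager_cover \<F> \<longleftrightarrow> (\<forall>M\<in>\<F>. meager M) \<and> \<Union>\<F> = UNIV"

definition open_splitting_family :: "real set set \<Rightarrow> bool" where
  "open_splitting_family \<U> \<longleftrightarrow> (\<forall>U\<in>\<U>. open U) \<and>
     (\<forall>A::real set. infinite A \<longrightarrow> (\<exists>U\<in>\<U>. splits U A))"

end

theory Submission
  imports Defs
begin

text \<open>The frontiers of an open splitting family cover the reals: every point x is the limit of
  an infinite set A, and an open set U splitting A can neither contain x (then almost all of A
  would lie in U) nor miss the closure of U (then almost all of A would lie outside U).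
  The frontier of an open set is nowhere dense, so U \<mapsto> frontier U yields a meager cover
  indexed by the splitting family.\<close>

lemma finite_range_diff_if_tendsto:
  assumes "f \<longlonglongrightarrow> x" "open S" "x \<in> S"
  shows "finite (range f - S)"
proof -
  obtain N where "\<forall>n\<ge>N. f n \<in> S"
    using topological_tendstoD[OF assms] by (auto simp: eventually_sequentially)
  then have "range f - S \<subseteq> f ` {..<N}"
    by (auto simp: not_less[symmetric])
  then show ?thesis
    using finite_subset by blast
qed

lemma infinite_range_if_tendsto_avoiding:
  fixes f :: "nat \<Rightarrow> 'a::t1_space"
  assumes "f \<longlonglongrightarrow> x" "\<And>n. f n \<noteq> x"
  shows "infinite (range f)"
proof
  assume "finite (range f)"
  then have "open (- range f)"
    by (simp add: finite_imp_closed open_Compl)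
  moreover have "x \<in> - range f"
    using assms(2) by auto
  ultimately have "eventually (\<lambda>n. f n \<in> - range f) sequentially"
    using topological_tendstoD[OF assms(1)] by blast
  then show False
    by simp
qed

lemma infinite_set_converging_to:
  fixes x :: "'a::{first_countable_topology, t1_space, perfect_space}"
  shows "\<exists>A. infinite A \<and> (\<forall>S. open S \<longrightarrow> x \<in> S \<longrightarrow> finite (A - S))"
proof -
  obtain f where "\<And>n. f n \<in> UNIV - {x}" "f \<longlonglongrightarrow> x"
    using islimpt_sequential[of x UNIV] by auto
  then show ?thesis
    using infinite_range_if_tendsto_avoiding finite_range_diff_if_tendsto by blast
qed

lemma in_frontier_if_splits_converging_set:
  assumes converging: "\<forall>S. open S \<longrightarrow> x \<in> S \<longrightarrow> finite (A - S)"
    and "open U" and "splits U A"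
  shows "x \<in> frontier U"
proof -
  have "x \<notin> U"
    using converging \<open>open U\<close> \<open>splits U A\<close> by (auto simp: splits_def)
  moreover have "x \<in> closure U"
  proof (rule ccontr)
    assume "x \<notin> closure U"
    then have "finite (A \<inter> closure U)"
      using converging[rule_format, of "- closure U"] by (simp add: open_Compl Diff_Compl)
    moreover have "A \<inter> U \<subseteq> A \<inter> closure U"
      using closure_subset by blast
    ultimately show False
      using \<open>splits U A\<close> unfolding splits_def by (meson finite_subset)
  qed
  ultimately show ?thesis
    using \<open>open U\<close> by (simp add: frontier_def interior_open)
qed

lemma frontiers_of_splitting_family_cover:
  fixes \<U> :: "'a::{first_countable_topology, t1_space, perfect_space} set set"
  assumes "\<forall>U\<in>\<U>. open U" and "\<forall>A. infinite A \<longrightarrow> (\<exists>U\<in>\<U>. splits U A)"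
  shows "\<Union>(frontier ` \<U>) = UNIV"
proof -
  have "\<exists>U\<in>\<U>. x \<in> frontier U" for x :: 'a
    using infinite_set_converging_to[of x] assms in_frontier_if_splits_converging_set by metis
  then show ?thesis
    by blast
qed

lemma nowhere_dense_frontier:
  assumes "open U"
  shows "nowhere_dense (frontier U)"
proof -
  have "interior (frontier U) \<inter> U = {}"
    using interior_subset[of "frontier U"] assms by (auto simp: frontier_def interior_open)
  then have "interior (frontier U) \<inter> closure U = {}"
    by (simp add: open_Int_closure_eq_empty)
  then have "interior (frontier U) = {}"
    using interior_subset[of "frontier U"] by (auto simp: frontier_def)
  then show ?thesis
    by (simp add: nowhere_dense_def)
qed

lemma meager_frontier:
  assumes "open U"
  shows "meager (frontier U)"
  unfolding meager_def using nowhere_dense_frontier[OF assms] by blast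

theorem theorem3p1:
  shows "\<forall>\<U>. open_splitting_family \<U> \<longrightarrow> (\<exists>\<F>. meager_cover \<F> \<and> \<F> \<lesssim> \<U>)"
proof (intro allI impI)
  fix \<U> assume "open_splitting_family \<U>"
  then have "meager_cover (frontier ` \<U>)"
    unfolding meager_cover_def open_splitting_family_def
    using meager_frontier frontiers_of_splitting_family_cover by blast
  then show "\<exists>\<F>. meager_cover \<F> \<and> \<F> \<lesssim> \<U>"
    using image_lepoll by blast
qed

end
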